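(* For every integer $t\ge 3$, the set $[3^t+11]$ admits a $3$-good partition. For $t\ge 4$ one such partition consists of the pairs $\{i,\ 3^t-i\}$ for $1\le i\le (3^t-1)/2$ with $i\notin\{3,9,12,13,14,15\}$, the singletons $\{3\}$ and $\{9\}$, the pairs $\{12,15\}$ and $\{13,14\}$, and the triples $\{3^t-3,3^t,3^t+3\}$, $\{3^t-9,3^t+1,3^t+8\}$, $\{3^t-12,3^t+5,3^t+7\}$, $\{3^t-13,3^t+2,3^t+11\}$, $\{3^t-14,3^t+4,3^t+10\}$, $\{3^t-15,3^t+6,3^t+9\}$.
   Context: A partition of $[n]=\{1,\dots,n\}$ into nonempty parts is called $3$-good if every part has at most $3$ elements and the sum of the elements of every part is a power of $3$, i.e. equals $3^s$ for some integer $s\ge 0$. *)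

theory Defs
  imports Main "HOL-Library.Disjoint_Sets"
begin

definition three_good :: "nat \<Rightarrow> nat set set \<Rightarrow> bool" where
  "three_good n P \<longleftrightarrow> partition_on {1..n} P \<and>
     (\<forall>B\<in>P. card B \<le> 3 \<and> (\<exists>s::nat. \<Sum>B = 3 ^ s))"

definition explicit_partition :: "nat \<Rightarrow> nat set set" where
  "explicit_partition t = (let N = (3::nat) ^ t in
     {{i, N - i} | i. 1 \<le> i \<and> i \<le> (N - 1) div 2 \<and> i \<notin> {3, 9, 12, 13, 14, 15}}
     \<union> {{3}, {9}, {12, 15}, {13, 14},
        {N - 3, N, N + 3}, {N - 9, N + 1, N + 8}, {N - 12, N + 5, N + 7},
        {N - 13, N + 2, N + 11}, {N - 14, N + 4, N + 10}, {N - 15, N + 6, N + 9}})"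

end

theory Submission
  imports Defs
begin

text \<open>With N = 3^t, the pairs {i, N - i} already have sum N, so they partition [N - 1] into
  good blocks apart from the few exceptional i. The twelve numbers N, ..., N + 11 and the
  complements N - i of the exceptional i are grouped into six triples of sum 3N, and the
  exceptional i themselves into blocks of sum 3 and 27. This needs N \<ge> 31, so t = 3
  (that is [38]) is settled by an explicit partition.\<close>

lemma partition_on_Un:
  assumes "partition_on A P" "partition_on B Q" "A \<inter> B = {}"
  shows "partition_on (A \<union> B) (P \<union> Q)"
  using assms by (auto simp: partition_on_def intro: disjoint_union)

lemma partition_on_set_concat:
  assumes "distinct (concat xss)" "[] \<notin> set xss"
  shows "partition_on (set (concat xss)) (set ` set xss)"
proof (rule partition_onI)
  fix p q assume "p \<in> set ` set xss" "q \<in> set ` set xss" "p \<noteq> q"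
  then show "disjnt p q"
    using assms(1) by (auto simp: distinct_concat_iff disjnt_def)
qed (use assms(2) in auto)

definition complement_pairs :: "nat \<Rightarrow> nat set \<Rightarrow> nat set set" where
  "complement_pairs N E = {{i, N - i} | i. 1 \<le> i \<and> i \<le> (N - 1) div 2 \<and> i \<notin> E}"

lemma complement_pairsE:
  assumes "B \<in> complement_pairs N E" "odd N"
  obtains i where "B = {i, N - i}" "1 \<le> i" "2 * i < N" "i \<notin> E"
proof -
  obtain i where i: "B = {i, N - i}" "1 \<le> i" "i \<le> (N - 1) div 2" "i \<notin> E"
    using assms(1) unfolding complement_pairs_def by blast
  moreover from i(3) have "2 * i < N" using assms(2) by presburger
  ultimately show thesis using that by blast
qed

lemma complement_pair_sum:
  assumes "B \<in> complement_pairs N E" "odd N"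
  shows "card B = 2" "\<Sum>B = N"
proof -
  obtain i where i: "B = {i, N - i}" "2 * i < N"
    using complement_pairsE[OF assms] by metis
  then have "i \<noteq> N - i" by auto
  with i show "card B = 2" "\<Sum>B = N" by auto
qed

lemma partition_on_complement_pairs:
  assumes "odd N" and E: "\<forall>e\<in>E. 2 * e < N"
  shows "partition_on ({1..<N} - (E \<union> (\<lambda>e. N - e) ` E)) (complement_pairs N E)"
proof (rule partition_onI)
  show "\<Union>(complement_pairs N E) = {1..<N} - (E \<union> (\<lambda>e. N - e) ` E)"
  proof (intro equalityI subsetI)
    fix x assume "x \<in> \<Union>(complement_pairs N E)"
    then obtain i where i: "x \<in> {i, N - i}" "1 \<le> i" "2 * i < N" "i \<notin> E"
      using complement_pairsE[OF _ \<open>odd N\<close>] by (metis UnionE)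
    have "i \<noteq> N - e" "N - i \<noteq> N - e" if "e \<in> E" for e
    proof -
      have "e \<noteq> i" "2 * e < N" using i(4) E that by auto
      then show "i \<noteq> N - e" "N - i \<noteq> N - e" using i(3) by linarith+
    qed
    with i show "x \<in> {1..<N} - (E \<union> (\<lambda>e. N - e) ` E)"
      using E by auto
  next
    fix x assume x: "x \<in> {1..<N} - (E \<union> (\<lambda>e. N - e) ` E)"
    have "N - (N - x) = x" using x by simp
    then have "N - x \<notin> E" using x by (metis DiffD2 UnCI image_eqI)
    show "x \<in> \<Union>(complement_pairs N E)"
    proof (cases "x \<le> (N - 1) div 2")
      case True
      then have "{x, N - x} \<in> complement_pairs N E"
        using x unfolding complement_pairs_def by auto
      then show ?thesis by blast
    next
      case False
      then have "N - x \<le> (N - 1) div 2" using \<open>odd N\<close> by presburger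
      then have "{N - x, N - (N - x)} \<in> complement_pairs N E"
        using x \<open>N - x \<notin> E\<close> unfolding complement_pairs_def by force
      then show ?thesis using \<open>N - (N - x) = x\<close> by (metis UnionI insertCI)
    qed
  qed
next
  fix p q assume p: "p \<in> complement_pairs N E" and q: "q \<in> complement_pairs N E" and "p \<noteq> q"
  obtain i where i: "p = {i, N - i}" "2 * i < N"
    using complement_pairsE[OF p \<open>odd N\<close>] by metis
  obtain j where j: "q = {j, N - j}" "2 * j < N"
    using complement_pairsE[OF q \<open>odd N\<close>] by metis
  have "i \<noteq> j" using \<open>p \<noteq> q\<close> i j by auto
  then show "disjnt p q" using i j by (auto simp: disjnt_def)
next
  show "{} \<notin> complement_pairs N E"
    unfolding complement_pairs_def by auto
qed

definition exceptional_indices :: "nat set" where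
  "exceptional_indices = {3, 9, 12, 13, 14, 15}"

definition exceptional_blocks :: "nat \<Rightarrow> nat set set" where
  "exceptional_blocks N = {{3}, {9}, {12, 15}, {13, 14},
     {N - 3, N, N + 3}, {N - 9, N + 1, N + 8}, {N - 12, N + 5, N + 7},
     {N - 13, N + 2, N + 11}, {N - 14, N + 4, N + 10}, {N - 15, N + 6, N + 9}}"

lemma partition_on_exceptional_blocks:
  assumes "31 \<le> N"
  shows "partition_on (exceptional_indices \<union> (\<lambda>e. N - e) ` exceptional_indices \<union> {N..N + 11})
           (exceptional_blocks N)"
proof -
  let ?L = "[[3], [9], [12, 15], [13, 14],
     [N - 3, N, N + 3], [N - 9, N + 1, N + 8], [N - 12, N + 5, N + 7],
     [N - 13, N + 2, N + 11], [N - 14, N + 4, N + 10], [N - 15, N + 6, N + 9]]"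
  obtain M where M: "N = M + 31" using assms by (metis add.commute le_Suc_ex)
  have "distinct (concat ?L)" unfolding M by simp
  moreover have
    "set (concat ?L) = exceptional_indices \<union> (\<lambda>e. N - e) ` exceptional_indices \<union> {N..N + 11}"
    unfolding M exceptional_indices_def by (rule set_eqI) (simp, presburger)
  moreover have "exceptional_blocks N = set ` set ?L"
    unfolding exceptional_blocks_def by (simp only: list.set image_insert image_empty)
  ultimately show ?thesis using partition_on_set_concat[of ?L] by simp
qed

lemma card_sum_balanced_triple:
  fixes N :: nat
  assumes "0 < a" "a \<le> N" "b < c" "b + c = a"
  shows "card {N - a, N + b, N + c} = 3" "\<Sum>{N - a, N + b, N + c} = 3 * N"
proof -
  have "N - a \<notin> {N + b, N + c}" "N + b \<noteq> N + c" using assms by auto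
  then show "card {N - a, N + b, N + c} = 3" "\<Sum>{N - a, N + b, N + c} = 3 * N"
    using assms by auto
qed

lemma exceptional_block_sum:
  assumes "15 \<le> N" "B \<in> exceptional_blocks N"
  shows "card B \<le> 3 \<and> \<Sum>B \<in> {3, 9, 27, 3 * N}"
proof -
  have triple: "card {N - a, N + b, N + c} \<le> 3 \<and> \<Sum>{N - a, N + b, N + c} \<in> {3, 9, 27, 3 * N}"
    if "0 < a" "a \<le> 15" "b < c" "b + c = a" for a b c
    using card_sum_balanced_triple[of a N b c] that assms(1) by simp
  from assms(2) show ?thesis
    unfolding exceptional_blocks_def
  proof (elim insertE emptyE)
  qed (use triple[of 3 0 3] triple[of 9 1 8] triple[of 12 5 7] triple[of 13 2 11]
        triple[of 14 4 10] triple[of 15 6 9] in simp_all)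
qed

lemma explicit_partition_eq:
  "explicit_partition t = complement_pairs (3 ^ t) exceptional_indices \<union> exceptional_blocks (3 ^ t)"
  unfolding explicit_partition_def complement_pairs_def exceptional_blocks_def
    exceptional_indices_def Let_def ..

lemma three_good_explicit_partition:
  assumes "4 \<le> t"
  shows "three_good (3 ^ t + 11) (explicit_partition t)"
proof -
  define N :: nat where "N = 3 ^ t"
  have "3 ^ 4 \<le> N" unfolding N_def using assms by (rule power_increasing) simp
  then have "31 \<le> N" by simp
  have "odd N" unfolding N_def by simp
  have exceptional_indices_small: "\<forall>e\<in>exceptional_indices. 0 < e \<and> 2 * e < N"
    using \<open>31 \<le> N\<close> unfolding exceptional_indices_def by auto
  let ?X = "exceptional_indices \<union> (\<lambda>e. N - e) ` exceptional_indices"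
  have "?X \<subseteq> {1..<N}"
    using exceptional_indices_small by auto
  then have "{1..N + 11} = ({1..<N} - ?X) \<union> (?X \<union> {N..N + 11})"
    using \<open>31 \<le> N\<close> by auto
  moreover have "partition_on ({1..<N} - ?X \<union> (?X \<union> {N..N + 11})) (explicit_partition t)"
    unfolding explicit_partition_eq N_def[symmetric]
    using \<open>31 \<le> N\<close> \<open>odd N\<close> exceptional_indices_small
    by (intro partition_on_Un partition_on_complement_pairs partition_on_exceptional_blocks) auto
  moreover have "card B \<le> 3 \<and> (\<exists>s. \<Sum>B = 3 ^ s)" if "B \<in> explicit_partition t" for B
  proof (cases "B \<in> complement_pairs N exceptional_indices")
    case True
    then show ?thesis using complement_pair_sum[OF True \<open>odd N\<close>] unfolding N_def by auto
  next
    case False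
    then have "B \<in> exceptional_blocks N"
      using that unfolding explicit_partition_eq N_def by blast
    then have "card B \<le> 3" "\<Sum>B \<in> {3 ^ 1, 3 ^ 2, 3 ^ 3, 3 ^ Suc t}"
      using exceptional_block_sum[of N B] \<open>31 \<le> N\<close> unfolding N_def by auto
    then show ?thesis by blast
  qed
  ultimately show ?thesis unfolding three_good_def N_def by auto
qed

lemma three_good_38:
  "three_good 38 {{1, 8}, {2, 25}, {3}, {4, 23}, {5, 22}, {6, 37, 38}, {7, 20}, {9, 18},
     {10, 35, 36}, {11, 16}, {12, 15}, {13, 14}, {17, 30, 34}, {19, 29, 33}, {21, 28, 32},
     {24, 26, 31}, {27}}"
  (is "three_good _ ?P")
proof -
  let ?L = "[[1, 8], [2, 25], [3], [4, 23], [5, 22], [6, 37, 38], [7, 20], [9, 18],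
     [10, 35, 36], [11, 16], [12, 15], [13, 14], [17, 30, 34], [19, 29, 33], [21, 28, 32],
     [24, 26, 31], [27::nat]]"
  have blocks: "set ` set ?L = ?P"
    by (simp only: list.set image_insert image_empty)
  have elements: "set (concat ?L) = {1..38}"
    by (rule set_eqI) (simp, presburger)
  have "partition_on (set (concat ?L)) (set ` set ?L)"
    by (rule partition_on_set_concat) simp_all
  then have "partition_on {1..38} ?P"
    by (simp only: blocks elements)
  moreover have "card B \<le> 3 \<and> (\<exists>s. \<Sum>B = 3 ^ s)" if "B \<in> ?P" for B
  proof -
    have "card B \<le> 3" "\<Sum>B \<in> {3 ^ 1, 3 ^ 2, 3 ^ 3, 3 ^ 4}"
      using that by auto
    then show ?thesis by blast
  qed
  ultimately show ?thesis unfolding three_good_def by blast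
qed

theorem mainTheorem12:
  shows "(\<forall>t::nat. t \<ge> 3 \<longrightarrow> (\<exists>P. three_good (3 ^ t + 11) P)) \<and>
         (\<forall>t::nat. t \<ge> 4 \<longrightarrow> three_good (3 ^ t + 11) (explicit_partition t))"
proof (intro conjI allI impI)
  fix t :: nat assume "t \<ge> 3"
  then consider "t = 3" | "t \<ge> 4" by linarith
  then show "\<exists>P. three_good (3 ^ t + 11) P"
  proof cases
    case 1
    then show ?thesis using three_good_38 by auto
  next
    case 2
    then show ?thesis using three_good_explicit_partition by blast
  qed
qed (rule three_good_explicit_partition)

end
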